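(* Let $\mu_0\in(-1,0)$ and $y>0$. If $$x\ge \frac{y^{\mu_0}e^{-y}}{\Gamma(\mu_0+1,y)}-1$$ (and $x>0$), then $Q_{\mu_0}(x,y)>0$.
   Context: For real $\mu$, $x>0$, $y\ge 0$: $Q_{\mu}(x,y)=x^{\frac12(1-\mu)}\int_y^{\infty} t^{\frac12(\mu-1)}e^{-t-x}I_{\mu-1}(2\sqrt{xt})\,dt$, where $I_\nu$ is the modified Bessel function of the first kind. $\Gamma(a,y)=\int_y^\infty t^{a-1}e^{-t}dt$. *)

theory Defs
  imports "HOL-Analysis.Analysis"
begin

text \<open>The reciprocal Gamma function rGamma (zero at the poles) is used, as is standard.\<close>
definition besselI :: "real \<Rightarrow> real \<Rightarrow> real" where
  "besselI nu z = (\<Sum>k. (z / 2) powr (2 * real k + nu) * rGamma (real k + nu + 1) / fact k)"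

definition upper_Gamma :: "real \<Rightarrow> real \<Rightarrow> real" where
  "upper_Gamma a y = (LBINT t:{y..}. t powr (a - 1) * exp (- t))"

definition marcumQ :: "real \<Rightarrow> real \<Rightarrow> real \<Rightarrow> real" where
  "marcumQ mu x y = x powr ((1 - mu) / 2) *
     (LBINT t:{y..}. t powr ((mu - 1) / 2) * exp (- t - x) * besselI (mu - 1) (2 * sqrt (x * t)))"

end

theory Submission
  imports Defs
begin

text \<open>Expanding the Bessel function, the integrand of \<open>Q\<^sub>\<mu>(x,y)\<close> becomes
  \<open>e^(-x) \<Sum>\<^sub>k x^k/k! t^(k+\<mu>-1) e^(-t) / \<Gamma>(k+\<mu>)\<close>. For \<open>-1 < \<mu> < 0\<close> only the term
  \<open>k = 0\<close> is negative, and the terms \<open>k \<ge> 2\<close> integrate to something positive. By the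
  recurrence \<open>\<Gamma>(\<mu>+1,y) = \<mu> \<Gamma>(\<mu>,y) + y^\<mu> e^(-y)\<close> and \<open>1/\<Gamma>(\<mu>) = \<mu>/\<Gamma>(\<mu>+1)\<close>, the
  terms \<open>k = 0, 1\<close> integrate to \<open>((x+1) \<Gamma>(\<mu>+1,y) - y^\<mu> e^(-y)) / \<Gamma>(\<mu>+1)\<close>, which is
  nonnegative precisely under the hypothesis on \<open>x\<close>.\<close>

definition marcumQ_term :: "real \<Rightarrow> real \<Rightarrow> nat \<Rightarrow> real \<Rightarrow> real" where
  "marcumQ_term mu x k t = x ^ k / fact k * rGamma (real k + mu) * t powr (real k + mu - 1) * exp (- t)"

lemma marcumQ_term_measurable [measurable]: "marcumQ_term mu x k \<in> borel_measurable borel"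
  unfolding marcumQ_term_def by measurable

lemma marcumQ_term_pos:
  assumes "t > 0" "x > 0" "real k + mu > 0"
  shows "marcumQ_term mu x k t > 0"
  using assms by (simp add: marcumQ_term_def rGamma_inverse_Gamma)

lemma marcumQ_term_Suc:
  assumes "t > 0" "real n + mu \<noteq> 0"
  shows "marcumQ_term mu x (Suc n) t = marcumQ_term mu x n t * (x * t / ((real n + 1) * (real n + mu)))"
proof -
  have rGamma_Suc: "rGamma (real (Suc n) + mu) = rGamma (real n + mu) / (real n + mu)"
    using rGamma_plus1[of "real n + mu"] assms(2) by (simp add: field_simps add_ac)
  have powr_Suc: "t powr (real (Suc n) + mu - 1) = t powr (real n + mu - 1) * t powr 1"
    by (simp only: powr_add [symmetric]) (simp add: add_ac)
  show ?thesis
    unfolding marcumQ_term_def rGamma_Suc powr_Suc using assms by (simp add: field_simps)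
qed

lemma summable_marcumQ_term:
  assumes "t > 0" "x > 0"
  shows "summable (\<lambda>k. marcumQ_term mu x k t)"
proof (rule summable_ratio_test [where c = "1/2" and N = "nat \<lceil>2 * x * t + \<bar>mu\<bar> + 2\<rceil>"])
  fix n assume "n \<ge> nat \<lceil>2 * x * t + \<bar>mu\<bar> + 2\<rceil>"
  then have n: "real n \<ge> 2 * x * t + \<bar>mu\<bar> + 2" by linarith
  with assms have nmu: "real n + mu \<ge> 1" by (smt (verit) mult_pos_pos)
  have "(real n + 1) * (real n + mu) \<ge> real n + 1"
    using nmu by (simp add: mult_le_cancel_left1)
  with n have "2 * (x * t) \<le> (real n + 1) * (real n + mu)"
    by linarith
  with assms nmu have ratio: "x * t / ((real n + 1) * (real n + mu)) \<le> 1/2"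
    by (simp add: divide_simps)
  have "norm (marcumQ_term mu x (Suc n) t)
      = norm (marcumQ_term mu x n t) * (x * t / ((real n + 1) * (real n + mu)))"
    using marcumQ_term_Suc [OF assms(1), of n mu x] nmu assms by (simp add: abs_mult)
  also have "\<dots> \<le> norm (marcumQ_term mu x n t) * (1/2)"
    by (intro mult_left_mono ratio) auto
  finally show "norm (marcumQ_term mu x (Suc n) t) \<le> 1/2 * norm (marcumQ_term mu x n t)"
    by simp
qed simp

lemma besselI_series_term_eq:
  assumes "t > 0" "x > 0"
  shows "(2 * sqrt (x * t) / 2) powr (2 * real k + (mu - 1)) * rGamma (real k + (mu - 1) + 1) / fact k
    = x powr ((mu - 1) / 2) * t powr ((1 - mu) / 2) * exp t * marcumQ_term mu x k t"
proof -
  have "x powr ((mu - 1) / 2) * t powr ((1 - mu) / 2) * exp t * marcumQ_term mu x k t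
      = exp ((mu - 1) / 2 * ln x + (1 - mu) / 2 * ln t + t + real k * ln x + (real k + mu - 1) * ln t - t)
        * rGamma (real k + mu) / fact k"
    using assms by (simp add: marcumQ_term_def powr_def exp_add exp_diff exp_minus exp_of_nat_mult)
  also have "(mu - 1) / 2 * ln x + (1 - mu) / 2 * ln t + t + real k * ln x + (real k + mu - 1) * ln t - t
      = (2 * real k + (mu - 1)) * ln (2 * sqrt (x * t) / 2)"
    using assms by (simp add: ln_sqrt ln_mult field_simps)
  finally show ?thesis
    using assms by (simp add: powr_def add_ac)
qed

lemma marcumQ_integrand_eq_series:
  assumes "t > 0" "x > 0"
  shows "x powr ((1 - mu) / 2) * (t powr ((mu - 1) / 2) * exp (- t - x) * besselI (mu - 1) (2 * sqrt (x * t)))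
    = exp (- x) * (\<Sum>k. marcumQ_term mu x k t)"
proof -
  define c where "c = x powr ((mu - 1) / 2) * t powr ((1 - mu) / 2) * exp t"
  have "besselI (mu - 1) (2 * sqrt (x * t)) = c * (\<Sum>k. marcumQ_term mu x k t)"
    unfolding besselI_def besselI_series_term_eq [OF assms] c_def [symmetric]
    by (rule suminf_mult [OF summable_marcumQ_term [OF assms]])
  moreover have "x powr ((1 - mu) / 2) * (t powr ((mu - 1) / 2) * exp (- t - x) * c) = exp (- x)"
    using assms by (simp add: c_def powr_add [symmetric] exp_add [symmetric] field_simps)
  ultimately show ?thesis
    by (simp add: ac_simps)
qed

lemma set_integral_atLeast_eq_greaterThan:
  fixes f :: "real \<Rightarrow> real"
  assumes [measurable]: "f \<in> borel_measurable borel"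
  shows "(LBINT t:{y..}. f t) = (LBINT t:{y<..}. f t)"
proof (rule set_integral_cong_set)
  show "set_borel_measurable lborel {y<..} f" "set_borel_measurable lborel {y..} f"
    unfolding set_borel_measurable_def by measurable
  show "AE t in lborel. (t \<in> {y<..}) = (t \<in> {y..})"
    using AE_lborel_singleton [of y] by eventually_elim auto
qed

lemma marcumQ_eq_integral_series:
  assumes "y > 0" "x > 0"
  shows "marcumQ mu x y = exp (- x) * (LBINT t:{y<..}. \<Sum>k. marcumQ_term mu x k t)"
proof -
  have "marcumQ mu x y = (LBINT t:{y..}. exp (- x) * (\<Sum>k. marcumQ_term mu x k t))"
    unfolding marcumQ_def set_integral_mult_right [symmetric]
    by (rule set_lebesgue_integral_cong) (use assms marcumQ_integrand_eq_series in auto)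
  also have "\<dots> = exp (- x) * (LBINT t:{y<..}. \<Sum>k. marcumQ_term mu x k t)"
    by (simp add: set_integral_atLeast_eq_greaterThan borel_measurable_suminf)
  finally show ?thesis .
qed

lemma set_integral_greaterThan_pos:
  fixes h :: "real \<Rightarrow> real"
  assumes "set_integrable lborel {y<..} h" and pos: "\<And>t. t > y \<Longrightarrow> h t > 0"
  shows "(LBINT t:{y<..}. h t) > 0"
proof -
  define g where "g t = indicator {y<..} t *\<^sub>R h t" for t
  have g: "integrable lborel g"
    using assms(1) unfolding set_integrable_def g_def .
  have g_nonneg: "AE t in lborel. 0 \<le> g t"
    using pos by (auto simp: g_def indicator_def less_imp_le)
  have "integral\<^sup>L lborel g \<noteq> 0"
  proof
    assume "integral\<^sup>L lborel g = 0"
    then have "AE t in lborel. g t = 0"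
      using integral_nonneg_eq_0_iff_AE [OF g g_nonneg] by simp
    then have "AE t in lborel. t \<le> y"
    proof (rule eventually_mono)
      show "g t = 0 \<Longrightarrow> t \<le> y" for t
        using pos [of t] by (cases "t > y") (auto simp: g_def)
    qed
    then obtain N where N: "{t \<in> space lborel. \<not> t \<le> y} \<subseteq> N" "N \<in> null_sets lborel"
      by (auto elim!: AE_E simp: null_sets_def)
    then have "{y<..y+1} \<in> null_sets lborel"
      by (intro null_sets_subset [OF N(2)]) auto
    then show False
      by (simp add: null_sets_def)
  qed
  with integral_nonneg_AE [OF g_nonneg] show ?thesis
    unfolding set_lebesgue_integral_def g_def by simp
qed

lemma upper_Gamma_eq_greaterThan:
  "upper_Gamma a y = (LBINT t:{y<..}. t powr (a - 1) * exp (- t))"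
  unfolding upper_Gamma_def by (rule set_integral_atLeast_eq_greaterThan) measurable

text \<open>The integrand below is \<open>-d/dt (t\<^sup>a e\<^sup>-\<^sup>t)\<close>; it is nonnegative for \<open>a < 0\<close>, which is
  what the nonnegative version of the fundamental theorem on \<open>(y, \<infinity>)\<close> needs.\<close>
lemma upper_Gamma_recurrence_integral:
  fixes a y :: real
  assumes "a < 0" "y > 0"
  defines "f \<equiv> \<lambda>t. t powr a * exp (- t) - a * (t powr (a - 1) * exp (- t))"
  shows "set_integrable lborel {y<..} f" and "(LBINT t:{y<..}. f t) = y powr a * exp (- y)"
proof -
  define F where "F t = - (t powr a * exp (- t))" for t :: real
  have deriv: "(F has_real_derivative f t) (at t)" if "t > 0" for t
  proof -
    have "((\<lambda>t. t powr a) has_real_derivative a * t powr (a - 1)) (at t)"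
      using that by (intro has_real_derivative_powr) auto
    then show ?thesis
      unfolding F_def f_def using that
      by (auto intro!: derivative_eq_intros simp: algebra_simps)
  qed
  have f_nonneg: "f t \<ge> 0" for t
  proof -
    have "a * (t powr (a - 1) * exp (- t)) \<le> 0"
      using assms(1) by (simp add: mult_nonpos_nonneg)
    moreover have "t powr a * exp (- t) \<ge> 0"
      by simp
    ultimately show ?thesis
      unfolding f_def by linarith
  qed
  have f_cont: "isCont f t" if "t > 0" for t
    unfolding f_def using that by (intro continuous_intros) auto
  have F_at_y: "((F \<circ> real_of_ereal) \<longlongrightarrow> F y) (at_right (ereal y))"
  proof -
    have "isCont F y"
      unfolding F_def using assms(2) by (intro continuous_intros) auto
    then show ?thesis
      unfolding ereal_tendsto_simps1 by (simp add: isCont_def filterlim_at_split)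
  qed
  have "((\<lambda>t. t powr a) \<longlongrightarrow> 0) at_top"
    using assms(1) by (intro tendsto_neg_powr filterlim_ident)
  moreover have "((\<lambda>t::real. exp (- t)) \<longlongrightarrow> 0) at_top"
    using filterlim_compose [OF exp_at_bot filterlim_uminus_at_bot_at_top] by (simp add: o_def)
  ultimately have "((\<lambda>t. t powr a * exp (- t)) \<longlongrightarrow> 0 * 0) at_top"
    by (rule tendsto_mult)
  then have F_at_top: "((F \<circ> real_of_ereal) \<longlongrightarrow> 0) (at_left \<infinity>)"
    unfolding ereal_tendsto_simps1 F_def using tendsto_minus by fastforce
  have "set_integrable lborel (einterval (ereal y) \<infinity>) f"
      "(LBINT t=ereal y..\<infinity>. f t) = 0 - F y"
    by (rule interval_integral_FTC_nonneg [OF _ deriv _ _ F_at_y F_at_top];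
        use assms(2) in \<open>auto simp: f_nonneg f_cont\<close>)+
  moreover have "einterval (ereal y) \<infinity> = {y<..}"
    by (auto simp: einterval_def)
  ultimately show "set_integrable lborel {y<..} f" "(LBINT t:{y<..}. f t) = y powr a * exp (- y)"
    unfolding interval_integral_to_infinity_eq F_def by simp_all
qed

lemma
  fixes a y :: real
  assumes "a < 0" "y > 0"
  shows set_integrable_upper_Gamma_succ_integrand:
      "set_integrable lborel {y<..} (\<lambda>t. t powr a * exp (- t))"
    and set_integrable_upper_Gamma_integrand:
      "set_integrable lborel {y<..} (\<lambda>t. t powr (a - 1) * exp (- t))"
proof -
  note f = upper_Gamma_recurrence_integral [OF assms]
  show P: "set_integrable lborel {y<..} (\<lambda>t. t powr a * exp (- t))"
  proof (rule set_integrable_bound [OF f(1)])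
    show "set_borel_measurable lborel {y<..} (\<lambda>t. t powr a * exp (- t))"
      unfolding set_borel_measurable_def by measurable
    have "norm (t powr a * exp (- t)) \<le> norm (t powr a * exp (- t) - a * (t powr (a - 1) * exp (- t)))"
      for t
    proof -
      have "a * (t powr (a - 1) * exp (- t)) \<le> 0"
        using assms(1) by (simp add: mult_nonpos_nonneg)
      moreover have "t powr a * exp (- t) \<ge> 0"
        by simp
      ultimately show ?thesis
        unfolding real_norm_def by linarith
    qed
    then show "AE t in lborel. t \<in> {y<..} \<longrightarrow> norm (t powr a * exp (- t))
        \<le> norm (t powr a * exp (- t) - a * (t powr (a - 1) * exp (- t)))"
      by (intro AE_I2) blast
  qed
  have eq: "(\<lambda>t. t powr (a - 1) * exp (- t))
      = (\<lambda>t. (1 / a) * (t powr a * exp (- t) - (t powr a * exp (- t) - a * (t powr (a - 1) * exp (- t)))))"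
    using assms(1) by (auto simp: fun_eq_iff)
  show "set_integrable lborel {y<..} (\<lambda>t. t powr (a - 1) * exp (- t))"
    by (subst eq) (intro set_integrable_mult_right set_integral_diff(1) P f(1))
qed

lemma upper_Gamma_plus1:
  assumes "a < 0" "y > 0"
  shows "upper_Gamma (a + 1) y = a * upper_Gamma a y + y powr a * exp (- y)"
  using upper_Gamma_recurrence_integral [OF assms] set_integrable_upper_Gamma_succ_integrand [OF assms]
    set_integrable_upper_Gamma_integrand [OF assms]
  by (simp add: upper_Gamma_eq_greaterThan set_integral_diff)

lemma upper_Gamma_pos:
  assumes "a < 0" "y > 0"
  shows "upper_Gamma (a + 1) y > 0"
  unfolding upper_Gamma_eq_greaterThan add_diff_cancel_right'
proof (rule set_integral_greaterThan_pos [OF set_integrable_upper_Gamma_succ_integrand [OF assms]])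
  show "t powr a * exp (- t) > 0" if "t > y" for t
    using that assms(2) by simp
qed

lemma nn_integral_marcumQ_term_le:
  assumes "real k + mu > 0" "x > 0" "y \<ge> 0"
  shows "(\<integral>\<^sup>+ t. ennreal (indicator {y<..} t * marcumQ_term mu x k t) \<partial>lborel) \<le> ennreal (x ^ k / fact k)"
proof -
  define s where "s = real k + mu"
  define d where "d = x ^ k / fact k * rGamma s"
  have s: "s > 0" and d: "d \<ge> 0"
    using assms by (simp_all add: s_def d_def rGamma_inverse_Gamma)
  have "(\<integral>\<^sup>+ t. ennreal (indicator {y<..} t * marcumQ_term mu x k t) \<partial>lborel)
      \<le> (\<integral>\<^sup>+ t. ennreal (indicator {0..} t * (d * (t powr (s - 1) / exp t))) \<partial>lborel)"
  proof (intro nn_integral_mono ennreal_leI)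
    show "indicator {y<..} t * marcumQ_term mu x k t \<le> indicator {0..} t * (d * (t powr (s - 1) / exp t))"
      for t
    proof (cases "t > y")
      case True
      then show ?thesis
        using assms by (simp add: marcumQ_term_def d_def s_def exp_minus field_simps)
    next
      case False
      then show ?thesis
        using d by (simp add: indicator_def)
    qed
  qed
  also have "\<dots> = ennreal (d * Gamma s)"
    using d by (intro nn_integral_has_integral_lebesgue has_integral_mult_right Gamma_integral_real s) auto
  also have "d * Gamma s = x ^ k / fact k"
    using Gamma_real_pos [OF s] by (simp add: d_def rGamma_inverse_Gamma)
  finally show ?thesis .
qed

text \<open>Termwise integration against the majorant \<open>\<Sum>\<^sub>k x\<^sup>k/k! = e\<^sup>x\<close>.\<close>
lemma set_integrable_marcumQ_tail:
  assumes "real n + mu > 0" "x > 0" "y \<ge> 0"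
  shows "set_integrable lborel {y<..} (\<lambda>t. \<Sum>k. marcumQ_term mu x (k + n) t)"
proof -
  define h where "h k t = indicator {y<..} t * marcumQ_term mu x (k + n) t" for k t
  have h_nonneg: "h k t \<ge> 0" for k t
    using marcumQ_term_pos [of t x "k + n" mu] assms by (auto simp: h_def indicator_def less_imp_le)
  have tail_summable: "summable (\<lambda>k. marcumQ_term mu x (k + n) t)" if "t > 0" for t
    using summable_ignore_initial_segment [OF summable_marcumQ_term [OF that assms(2)]] .
  have h_summable: "summable (\<lambda>k. h k t)" for t
    using tail_summable [of t] assms(3) by (cases "t > y") (auto simp: h_def)
  have tail_eq: "indicator {y<..} t * (\<Sum>k. marcumQ_term mu x (k + n) t) = (\<Sum>k. h k t)" for t
    using suminf_mult [OF tail_summable [of t]] assms(3) by (cases "t > y") (auto simp: h_def)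
  have exp_tail: "summable (\<lambda>k. x ^ (k + n) / fact (k + n))"
    using summable_ignore_initial_segment [OF summable_exp [of x], of n]
    by (simp add: divide_inverse mult.commute)
  have "(\<integral>\<^sup>+ t. ennreal (indicator {y<..} t * (\<Sum>k. marcumQ_term mu x (k + n) t)) \<partial>lborel)
      = (\<Sum>k. \<integral>\<^sup>+ t. ennreal (h k t) \<partial>lborel)"
    unfolding tail_eq suminf_ennreal2 [OF h_nonneg h_summable, symmetric]
    by (rule nn_integral_suminf) (simp add: h_def)
  also have "\<dots> \<le> (\<Sum>k. ennreal (x ^ (k + n) / fact (k + n)))"
    using assms by (intro suminf_le summableI) (auto simp: h_def intro: nn_integral_marcumQ_term_le)
  also have "\<dots> < \<infinity>"
    using assms(2) by (simp add: suminf_ennreal2 [OF _ exp_tail])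
  finally have finite: "(\<integral>\<^sup>+ t. ennreal (indicator {y<..} t * (\<Sum>k. marcumQ_term mu x (k + n) t)) \<partial>lborel) < \<infinity>" .
  show ?thesis
    unfolding set_integrable_def
  proof (rule integrableI_nonneg)
    show "(\<lambda>t. indicat_real {y<..} t *\<^sub>R (\<Sum>k. marcumQ_term mu x (k + n) t)) \<in> borel_measurable lborel"
      by measurable
    show "AE t in lborel. 0 \<le> indicat_real {y<..} t *\<^sub>R (\<Sum>k. marcumQ_term mu x (k + n) t)"
      using tail_eq suminf_nonneg [OF h_summable h_nonneg] by (intro AE_I2) simp
    show "(\<integral>\<^sup>+ t. ennreal (indicat_real {y<..} t *\<^sub>R (\<Sum>k. marcumQ_term mu x (k + n) t)) \<partial>lborel) < \<infinity>"
      using finite by simp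
  qed
qed

lemma integral_marcumQ_series_eq:
  assumes "-2 < mu" "mu < 0" "x > 0" "y > 0"
  shows "(LBINT t:{y<..}. \<Sum>k. marcumQ_term mu x k t)
    = rGamma (mu + 1) * ((x + 1) * upper_Gamma (mu + 1) y - y powr mu * exp (- y))
      + (LBINT t:{y<..}. \<Sum>k. marcumQ_term mu x (k + 2) t)"
proof -
  let ?P = "\<lambda>t. t powr mu * exp (- t)"
  let ?Q = "\<lambda>t. t powr (mu - 1) * exp (- t)"
  let ?R = "\<lambda>t. \<Sum>k. marcumQ_term mu x (k + 2) t"
  have P: "set_integrable lborel {y<..} ?P" and Q: "set_integrable lborel {y<..} ?Q"
    using assms by (simp_all add: set_integrable_upper_Gamma_succ_integrand set_integrable_upper_Gamma_integrand)
  have R: "set_integrable lborel {y<..} ?R"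
    using assms by (intro set_integrable_marcumQ_tail) auto
  have split: "(\<Sum>k. marcumQ_term mu x k t) = rGamma mu * ?Q t + x * rGamma (mu + 1) * ?P t + ?R t"
    if "t > 0" for t
  proof -
    have "(\<Sum>k. marcumQ_term mu x k t) = ?R t + (\<Sum>k<2. marcumQ_term mu x k t)"
      by (rule suminf_split_initial_segment [OF summable_marcumQ_term [OF that assms(3)]])
    then show ?thesis
      by (simp add: numeral_2_eq_2 marcumQ_term_def add_ac)
  qed
  have "(LBINT t:{y<..}. \<Sum>k. marcumQ_term mu x k t)
      = (LBINT t:{y<..}. rGamma mu * ?Q t + x * rGamma (mu + 1) * ?P t + ?R t)"
    using assms(4) by (intro set_lebesgue_integral_cong) (auto simp: split)
  also have "\<dots> = rGamma mu * upper_Gamma mu y + x * rGamma (mu + 1) * upper_Gamma (mu + 1) y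
      + (LBINT t:{y<..}. ?R t)"
    using P Q R by (simp add: upper_Gamma_eq_greaterThan set_integral_add)
  also have "rGamma mu * upper_Gamma mu y = rGamma (mu + 1) * (upper_Gamma (mu + 1) y - y powr mu * exp (- y))"
    using rGamma_plus1 [of mu] upper_Gamma_plus1 [OF assms(2,4)] by (simp add: mult.commute)
  finally show ?thesis
    by (simp add: algebra_simps)
qed

theorem proposition1:
  fixes mu0 x y :: real
  assumes "-1 < mu0" and "mu0 < 0" and "y > 0" and "x > 0"
    and "x \<ge> y powr mu0 * exp (- y) / upper_Gamma (mu0 + 1) y - 1"
  shows "marcumQ mu0 x y > 0"
proof -
  have "(x + 1) * upper_Gamma (mu0 + 1) y - y powr mu0 * exp (- y) \<ge> 0"
    using assms(5) upper_Gamma_pos [OF assms(2,3)] by (simp add: field_simps)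
  moreover have "rGamma (mu0 + 1) > 0"
    using assms(1) by (simp add: rGamma_inverse_Gamma)
  moreover have "(LBINT t:{y<..}. \<Sum>k. marcumQ_term mu0 x (k + 2) t) > 0"
  proof (rule set_integral_greaterThan_pos)
    show "set_integrable lborel {y<..} (\<lambda>t. \<Sum>k. marcumQ_term mu0 x (k + 2) t)"
      using assms by (intro set_integrable_marcumQ_tail) auto
    show "(\<Sum>k. marcumQ_term mu0 x (k + 2) t) > 0" if "t > y" for t
      using that assms
      by (intro suminf_pos summable_ignore_initial_segment summable_marcumQ_term marcumQ_term_pos) auto
  qed
  ultimately have "(LBINT t:{y<..}. \<Sum>k. marcumQ_term mu0 x k t) > 0"
    using assms by (simp add: integral_marcumQ_series_eq add_nonneg_pos)
  then show ?thesis
    using assms by (simp add: marcumQ_eq_integral_series)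
qed

end
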